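(* Let $\phi$ be the standard Gaussian density and $g'(x)=\mathsf{sign}(x)\phi(x)$. If $\mu$ is a non-negative Borel measure on $\mathbb{R}$ such that $$\int_{-\infty}^{\infty}g'(t-x)\,\mu(\mathrm{d}x)=0\quad\text{for all } t\in\mathbb{R},$$ then $\mu$ is a tempered distribution. *)

theory Defs
  imports "HOL-Probability.Probability"
begin

definition gprime :: "real \<Rightarrow> real" where
  "gprime x = sgn x * std_normal_density x"

definition schwartz_fun :: "(real \<Rightarrow> real) \<Rightarrow> bool" where
  "schwartz_fun f \<longleftrightarrow>
     (\<forall>m x. (deriv ^^ m) f differentiable (at x)) \<and>
     (\<forall>k m. bounded (range (\<lambda>x. x ^ k * (deriv ^^ m) f x)))"

definition schwartz_seminorm :: "nat \<Rightarrow> nat \<Rightarrow> (real \<Rightarrow> real) \<Rightarrow> real" where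
  "schwartz_seminorm k m f = (SUP x. \<bar>x ^ k * (deriv ^^ m) f x\<bar>)"

text \<open>A Borel measure on R is a tempered distribution if integration against it is a
  well-defined linear functional on the Schwartz space which is continuous, i.e. bounded by
  finitely many Schwartz seminorms.\<close>
definition tempered_measure :: "real measure \<Rightarrow> bool" where
  "tempered_measure M \<longleftrightarrow>
     (\<forall>f. schwartz_fun f \<longrightarrow> integrable M f) \<and>
     (\<exists>C N. \<forall>f. schwartz_fun f \<longrightarrow>
        \<bar>integral\<^sup>L M f\<bar> \<le> C * (\<Sum>k\<le>N. \<Sum>m\<le>N. schwartz_seminorm k m f))"

end

theory Submission
  imports Defs "HOL-Probability.Sinc_Integral"
begin

text \<open>Let \<open>G y = \<integral>\<^sub>y\<^sup>\<infinity> g'(u) du\<close>. Since \<open>g'\<close> is odd, \<open>G\<close> is non-negative, bounded by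
  \<open>exp (-y\<^sup>2/2)\<close> and bounded below by \<open>\<phi>(2)\<close> on \<open>[-1, 1]\<close>. The measure \<open>\<mu>\<close>
  integrates the positive function \<open>\<phi>(-x)\<close>, hence is \<open>\<sigma>\<close>-finite, and by Fubini
  \<open>\<integral> G(a - x) - G(b - x) d\<mu>(x) = \<integral>\<^sub>a\<^sup>b \<integral> g'(t - x) d\<mu>(x) dt = 0\<close>, so
  \<open>T(s) = \<integral> G(s - x) d\<mu>(x)\<close> is constant. As \<open>G(s - x) \<ge> \<phi>(2)\<close> for \<open>|s - x| \<le> 1\<close>, the weight \<open>w(x) = 1/(1 + x\<^sup>2)\<close>
  satisfies \<open>w(x) \<le> c \<integral> w(s) G(s - x) ds\<close>, and Tonelli gives
  \<open>\<integral> w d\<mu> \<le> c \<integral> w(s) T(s) ds = c \<pi> T(0) < \<infinity>\<close>. A Schwartz function is bounded by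
  \<open>(p\<^sub>0\<^sub>0(f) + p\<^sub>2\<^sub>0(f)) w\<close>, which makes \<open>\<mu>\<close> tempered.\<close>

lemma std_normal_density_antimono:
  assumes "\<bar>x\<bar> \<le> \<bar>y\<bar>"
  shows "std_normal_density y \<le> std_normal_density x"
proof -
  have "x\<^sup>2 \<le> y\<^sup>2" using assms by (simp add: abs_le_square_iff)
  then show ?thesis by (simp add: std_normal_density_def divide_right_mono)
qed

lemma std_normal_density_add_le:
  assumes "y \<ge> 0" "v \<ge> 0"
  shows "std_normal_density (y + v) \<le> exp (- (y\<^sup>2 / 2)) * std_normal_density v"
proof -
  have "(y + v)\<^sup>2 = y\<^sup>2 + v\<^sup>2 + 2 * (y * v)" by (simp add: power2_eq_square algebra_simps)
  moreover have "0 \<le> y * v" using assms by simp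
  ultimately have "- ((y + v)\<^sup>2 / 2) \<le> - (y\<^sup>2 / 2) + - (v\<^sup>2 / 2)" by linarith
  then have "exp (- ((y + v)\<^sup>2 / 2)) \<le> exp (- (y\<^sup>2 / 2)) * exp (- (v\<^sup>2 / 2))"
    by (simp flip: exp_add)
  then show ?thesis by (simp add: std_normal_density_def divide_right_mono)
qed

lemma std_normal_density_le_endpoints:
  assumes "a \<le> t" "t \<le> b"
  shows "std_normal_density (t - x)
           \<le> exp ((b - a)\<^sup>2 / 2) * (std_normal_density (a - x) + std_normal_density (b - x))"
    (is "_ \<le> ?K * ?S")
proof -
  have "?S \<le> ?K * ?S" using mult_right_mono[of 1 ?K ?S] by simp
  consider "x \<le> a" | "b \<le> x" | "a < x" "x < b" by linarith
  then show ?thesis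
  proof cases
    case 1
    then have "std_normal_density (t - x) \<le> std_normal_density (a - x)"
      using assms by (intro std_normal_density_antimono) auto
    then show ?thesis using \<open>?S \<le> ?K * ?S\<close> normal_density_nonneg[of 0 1 "b - x"] by linarith
  next
    case 2
    then have "std_normal_density (t - x) \<le> std_normal_density (b - x)"
      using assms by (intro std_normal_density_antimono) auto
    then show ?thesis using \<open>?S \<le> ?K * ?S\<close> normal_density_nonneg[of 0 1 "a - x"] by linarith
  next
    case 3
    have "std_normal_density (t - x) \<le> std_normal_density 0"
      by (intro std_normal_density_antimono) auto
    also have "\<dots> \<le> ?K * std_normal_density (a - x)"
    proof -
      have "(a - x)\<^sup>2 \<le> (b - a)\<^sup>2" using 3 by (simp flip: abs_le_square_iff)
      then have "1 \<le> ?K * exp (- ((a - x)\<^sup>2 / 2))" by (simp flip: exp_add)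
      then show ?thesis by (simp add: std_normal_density_def divide_right_mono)
    qed
    also have "\<dots> \<le> ?K * ?S" by (intro mult_left_mono) auto
    finally show ?thesis .
  qed
qed

lemma abs_gprime_le: "\<bar>gprime x\<bar> \<le> std_normal_density x"
  by (auto simp: gprime_def sgn_if)

lemma abs_gprime_eq: "x \<noteq> 0 \<Longrightarrow> \<bar>gprime x\<bar> = std_normal_density x"
  by (auto simp: gprime_def sgn_if)

lemma gprime_eq_std_normal_density: "x > 0 \<Longrightarrow> gprime x = std_normal_density x"
  by (simp add: gprime_def)

lemma gprime_nonneg: "x \<ge> 0 \<Longrightarrow> gprime x \<ge> 0"
  by (simp add: gprime_def)

lemma gprime_minus: "gprime (- x) = - gprime x"
  by (simp add: gprime_def normal_density_def)

lemma borel_measurable_gprime[measurable]: "gprime \<in> borel_measurable borel"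
  unfolding gprime_def[abs_def] by measurable

lemma integrable_std_normal_density: "integrable lborel std_normal_density"
  by (rule integrable_normal_density) simp

lemma integrable_gprime: "integrable lborel gprime"
  by (rule Bochner_Integration.integrable_bound[OF integrable_std_normal_density])
     (auto simp: abs_gprime_le)

lemma integrable_indicator_gprime:
  "S \<in> sets borel \<Longrightarrow> integrable lborel (\<lambda>u. indicator S u * gprime u)"
  using integrable_mult_indicator[OF _ integrable_gprime] by simp

lemma integral_gprime: "(\<integral>x. gprime x \<partial>lborel) = 0"
proof -
  have "(\<integral>x. gprime x \<partial>lborel) = \<bar>-1\<bar> *\<^sub>R (\<integral>x. gprime (0 + (-1) * x) \<partial>lborel)"
    by (rule lborel_integral_real_affine) simp
  then show ?thesis by (simp add: gprime_minus)
qed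

lemma integral_indicator_gprime_le:
  assumes [measurable]: "S \<in> sets borel" and "z \<ge> 0" "S \<subseteq> {z..}"
  shows "(\<integral>u. indicator S u * gprime u \<partial>lborel) \<le> exp (- (z\<^sup>2 / 2))"
proof -
  have "(\<integral>u. indicator S u * gprime u \<partial>lborel)
      \<le> (\<integral>u. indicator {z..} u * std_normal_density u \<partial>lborel)"
    using assms(3) integrable_mult_indicator[OF _ integrable_std_normal_density, of "{z..}"]
    by (intro integral_mono integrable_indicator_gprime)
       (auto split: split_indicator intro: order_trans[OF abs_ge_self abs_gprime_le])
  also have "\<dots> = (\<integral>v. indicator {0..} v * std_normal_density (z + v) \<partial>lborel)"
    using lborel_integral_real_affine[of 1 "\<lambda>u. indicator {z..} u * std_normal_density u" z]
    by (simp add: indicator_def)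
  also have "\<dots> \<le> (\<integral>v. exp (- (z\<^sup>2 / 2)) * std_normal_density v \<partial>lborel)"
  proof (rule integral_mono)
    show "integrable lborel (\<lambda>v. indicator {0..} v * std_normal_density (z + v))"
      by (rule Bochner_Integration.integrable_bound
            [of _ "\<lambda>v. exp (- (z\<^sup>2 / 2)) * std_normal_density v"])
         (auto simp: abs_mult \<open>z \<ge> 0\<close> std_normal_density_add_le integrable_std_normal_density
           split: split_indicator)
  qed (auto simp: \<open>z \<ge> 0\<close> std_normal_density_add_le split: split_indicator)
  also have "\<dots> = exp (- (z\<^sup>2 / 2))" by simp
  finally show ?thesis .
qed

lemma integral_indicator_gprime_ge:
  assumes [measurable]: "S \<in> sets borel" and "{1<..2} \<subseteq> S" "S \<subseteq> {0..}"
  shows "std_normal_density 2 \<le> (\<integral>u. indicator S u * gprime u \<partial>lborel)"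
proof -
  have "std_normal_density 2 = (\<integral>u. indicator {1<..2::real} u * std_normal_density 2 \<partial>lborel)"
    by simp
  also have "\<dots> \<le> (\<integral>u. indicator S u * gprime u \<partial>lborel)"
  proof (intro integral_mono integrable_indicator_gprime)
    fix u :: real
    show "indicator {1<..2} u * std_normal_density 2 \<le> indicator S u * gprime u"
      using assms(2,3)
      by (auto simp: gprime_eq_std_normal_density gprime_nonneg std_normal_density_antimono split: split_indicator)
  qed simp_all
  finally show ?thesis .
qed

definition gprime_tail :: "real \<Rightarrow> real" where
  "gprime_tail y = (\<integral>u. indicator {y..} u * gprime u \<partial>lborel)"

lemma gprime_tail_neg:
  assumes "y < 0"
  shows "gprime_tail y = (\<integral>u. indicator {-y<..} u * gprime u \<partial>lborel)"
proof -
  have "gprime_tail y = (\<integral>u. gprime u - indicator {..<y} u * gprime u \<partial>lborel)"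
    unfolding gprime_tail_def by (intro Bochner_Integration.integral_cong) (auto split: split_indicator)
  also have "\<dots> = - (\<integral>u. indicator {..<y} u * gprime u \<partial>lborel)"
    by (simp add: integrable_gprime integrable_indicator_gprime integral_gprime)
  also have "(\<integral>u. indicator {..<y} u * gprime u \<partial>lborel)
      = \<bar>-1\<bar> *\<^sub>R (\<integral>v. indicator {..<y} (0 + -1 * v) * gprime (0 + -1 * v) \<partial>lborel)"
    by (rule lborel_integral_real_affine) simp
  also have "\<dots> = - (\<integral>v. indicator {-y<..} v * gprime v \<partial>lborel)"
    by (simp add: gprime_minus indicator_def minus_less_iff)
  finally show ?thesis by simp
qed

lemma gprime_tail_nonneg: "0 \<le> gprime_tail y"
proof (cases "y < 0")
  case True
  then show ?thesis unfolding gprime_tail_neg[OF True]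
    by (auto simp: gprime_nonneg split: split_indicator intro!: integral_nonneg)
qed (auto simp: gprime_tail_def gprime_nonneg split: split_indicator intro!: integral_nonneg)

lemma gprime_tail_le: "gprime_tail y \<le> exp (- (y\<^sup>2 / 2))"
proof (cases "y < 0")
  case True
  then show ?thesis unfolding gprime_tail_neg[OF True]
    using integral_indicator_gprime_le[of "{-y<..}" "-y"] by force
qed (auto simp: gprime_tail_def intro: integral_indicator_gprime_le)

lemma gprime_tail_ge:
  assumes "\<bar>y\<bar> \<le> 1"
  shows "std_normal_density 2 \<le> gprime_tail y"
proof (cases "y < 0")
  case True
  then show ?thesis unfolding gprime_tail_neg[OF True]
    using assms by (intro integral_indicator_gprime_ge) auto
qed (use assms in \<open>auto simp: gprime_tail_def intro: integral_indicator_gprime_ge\<close>)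

lemma borel_measurable_gprime_tail[measurable]: "gprime_tail \<in> borel_measurable borel"
proof -
  have "(\<lambda>y. \<integral>u. (if y \<le> u then gprime u else 0) \<partial>lborel) \<in> borel_measurable borel"
    by measurable
  moreover have "gprime_tail = (\<lambda>y. \<integral>u. (if y \<le> u then gprime u else 0) \<partial>lborel)"
    unfolding gprime_tail_def by (intro ext Bochner_Integration.integral_cong) (auto split: split_indicator)
  ultimately show ?thesis by simp
qed

lemma integrable_lborel_inverse_1_plus_square: "integrable lborel (\<lambda>x::real. inverse (1 + x\<^sup>2))"
  using integrable_inverse_1_plus_square unfolding set_integrable_def by (simp add: einterval_def)

lemma inverse_1_plus_square_le:
  fixes s x :: real
  assumes "\<bar>s - x\<bar> \<le> 1"
  shows "inverse (1 + x\<^sup>2) \<le> 3 * inverse (1 + s\<^sup>2)"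
proof -
  have "\<bar>s\<bar> \<le> \<bar>\<bar>x\<bar> + 1\<bar>" using assms by linarith
  then have "s\<^sup>2 \<le> (\<bar>x\<bar> + 1)\<^sup>2" by (metis abs_le_square_iff)
  also have "\<dots> \<le> 2 * x\<^sup>2 + 2" using zero_le_power2[of "\<bar>x\<bar> - 1"]
    by (simp add: power2_eq_square algebra_simps)
  finally have "1 + s\<^sup>2 \<le> 3 + 3 * x\<^sup>2" using zero_le_power2[of x] by linarith
  then show ?thesis by (simp add: field_simps add_pos_nonneg)
qed

lemma inverse_1_plus_square_le_nn_integral_gprime_tail:
  "ennreal (inverse (1 + x\<^sup>2))
     \<le> (\<integral>\<^sup>+s. ennreal (3 / (2 * std_normal_density 2) * inverse (1 + s\<^sup>2) * gprime_tail (s - x))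
          \<partial>lborel)"
proof -
  let ?q = "std_normal_density 2"
  have "0 < ?q" by (simp add: normal_density_pos)
  have pointwise: "inverse (1 + x\<^sup>2) / 2 \<le> 3 / (2 * ?q) * inverse (1 + s\<^sup>2) * gprime_tail (s - x)"
    if "\<bar>s - x\<bar> \<le> 1" for s
  proof -
    have "inverse (1 + x\<^sup>2) / 2 \<le> 3 / (2 * ?q) * inverse (1 + s\<^sup>2) * ?q"
      using inverse_1_plus_square_le[OF that] \<open>0 < ?q\<close> by simp
    also have "\<dots> \<le> 3 / (2 * ?q) * inverse (1 + s\<^sup>2) * gprime_tail (s - x)"
      using gprime_tail_ge[OF that] \<open>0 < ?q\<close> by (intro mult_left_mono) (auto simp: add_pos_nonneg)
    finally show ?thesis .
  qed
  have "ennreal (inverse (1 + x\<^sup>2))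
      = (\<integral>\<^sup>+s. ennreal (inverse (1 + x\<^sup>2) / 2) * indicator {x - 1..x + 1} s \<partial>lborel)"
    using ennreal_mult[of "inverse (1 + x\<^sup>2) / 2" 2] by (simp add: nn_integral_cmult_indicator)
  also have "\<dots>
      \<le> (\<integral>\<^sup>+s. ennreal (3 / (2 * ?q) * inverse (1 + s\<^sup>2) * gprime_tail (s - x)) \<partial>lborel)"
    using pointwise by (intro nn_integral_mono) (auto split: split_indicator intro!: ennreal_leI)
  finally show ?thesis .
qed

lemma sigma_finite_measure_if_integrable_pos:
  fixes h :: "'a \<Rightarrow> real"
  assumes h: "integrable M h" and pos: "\<And>x. x \<in> space M \<Longrightarrow> 0 < h x"
  shows "sigma_finite_measure M"
proof
  define A where "A n = {x \<in> space M. inverse (real (Suc n)) \<le> h x}" for n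
  have [measurable]: "h \<in> borel_measurable M" using h by blast
  have "emeasure M (A n) \<noteq> \<infinity>" for n
  proof -
    have "emeasure M (A n) \<le> ennreal ((1 / inverse (real (Suc n))) * (\<integral>x. h x \<partial>M))"
      unfolding A_def using pos by (intro integral_Markov_inequality h AE_I2) (auto simp: less_imp_le)
    then show ?thesis by (auto simp: top_unique)
  qed
  moreover have "(\<Union>n. A n) = space M"
    by (auto simp: A_def) (metis less_imp_le of_nat_Suc pos reals_Archimedean)
  ultimately show "\<exists>A. countable A \<and> A \<subseteq> sets M \<and> \<Union>A = space M \<and> (\<forall>a\<in>A. emeasure M a \<noteq> \<infinity>)"
    by (intro exI[of _ "range A"]) (auto simp: A_def)
qed

context
  fixes \<mu> :: "real measure"
  assumes sets_\<mu>[measurable_cong]: "sets \<mu> = sets borel"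
    and integrable_gprime_translate: "\<And>t. integrable \<mu> (\<lambda>x. gprime (t - x))"
begin

lemma integrable_std_normal_density_translate: "integrable \<mu> (\<lambda>x. std_normal_density (s - x))"
proof (rule Bochner_Integration.integrable_bound)
  \<comment> \<open>\<open>g'\<close> vanishes at \<open>0\<close>, where the translate by \<open>1\<close> takes over.\<close>
  show "integrable \<mu> (\<lambda>x. \<bar>gprime (s - x)\<bar> + exp (1/2) * \<bar>gprime (s + 1 - x)\<bar>)"
    by (intro Bochner_Integration.integrable_add integrable_abs integrable_mult_right
          integrable_gprime_translate)
  have "std_normal_density 0 = exp (1/2) * std_normal_density 1"
    by (simp add: std_normal_density_def flip: exp_add)
  then have "std_normal_density (s - x) \<le> \<bar>gprime (s - x)\<bar> + exp (1/2) * \<bar>gprime (s + 1 - x)\<bar>"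
    for x by (cases "x = s") (simp_all add: abs_gprime_eq)
  then show "AE x in \<mu>. norm (std_normal_density (s - x))
                        \<le> norm (\<bar>gprime (s - x)\<bar> + exp (1/2) * \<bar>gprime (s + 1 - x)\<bar>)"
    by simp
qed measurable

lemma sigma_finite_if_integrable_gprime_translate: "sigma_finite_measure \<mu>"
  by (rule sigma_finite_measure_if_integrable_pos[OF integrable_std_normal_density_translate[of 0]])
     (simp add: normal_density_pos)

lemma integrable_gprime_tail_translate: "integrable \<mu> (\<lambda>x. gprime_tail (s - x))"
proof (rule Bochner_Integration.integrable_bound)
  show "integrable \<mu> (\<lambda>x. sqrt (2 * pi) * std_normal_density (s - x))"
    by (intro integrable_mult_right integrable_std_normal_density_translate)
  show "AE x in \<mu>. norm (gprime_tail (s - x)) \<le> norm (sqrt (2 * pi) * std_normal_density (s - x))"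
    using gprime_tail_le gprime_tail_nonneg by (simp add: std_normal_density_def)
qed measurable

lemma integrable_pair_indicator_gprime_translate:
  assumes "a \<le> b"
  shows "integrable (\<mu> \<Otimes>\<^sub>M lborel) (\<lambda>(x, t). indicator {a..<b} t * gprime (t - x))"
    (is "integrable _ ?F")
proof (rule integrableI_bounded)
  have [measurable_cong]: "sets (\<mu> \<Otimes>\<^sub>M lborel) = sets (borel \<Otimes>\<^sub>M borel)"
    by (intro sets_pair_measure_cong) (simp_all add: sets_\<mu>)
  show "?F \<in> borel_measurable (\<mu> \<Otimes>\<^sub>M lborel)"
    by measurable
  define B where
    "B x = exp ((b - a)\<^sup>2 / 2) * (std_normal_density (a - x) + std_normal_density (b - x))" for x
  have "(\<integral>\<^sup>+p. ennreal (norm (?F p)) \<partial>(\<mu> \<Otimes>\<^sub>M lborel))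
      = (\<integral>\<^sup>+x. (\<integral>\<^sup>+t. ennreal (indicator {a..<b} t * \<bar>gprime (t - x)\<bar>) \<partial>lborel) \<partial>\<mu>)"
    by (subst lborel.nn_integral_fst[symmetric]) (auto simp: case_prod_beta abs_mult)
  also have "\<dots> \<le> (\<integral>\<^sup>+x. ennreal (B x * (b - a)) \<partial>\<mu>)"
  proof (rule nn_integral_mono)
    fix x
    have "(\<integral>\<^sup>+t. ennreal (indicator {a..<b} t * \<bar>gprime (t - x)\<bar>) \<partial>lborel)
        \<le> (\<integral>\<^sup>+t. ennreal (B x) * indicator {a..<b} t \<partial>lborel)" (is "?I \<le> _")
      unfolding B_def
      by (intro nn_integral_mono)
         (auto split: split_indicator intro: order_trans[OF abs_gprime_le std_normal_density_le_endpoints])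
    also have "\<dots> = ennreal (B x * (b - a))"
      using assms by (simp add: nn_integral_cmult_indicator ennreal_mult B_def)
    finally show "?I \<le> ennreal (B x * (b - a))" .
  qed
  also have "\<dots> = ennreal (\<integral>x. B x * (b - a) \<partial>\<mu>)"
    using assms unfolding B_def
    by (intro nn_integral_eq_integral integrable_mult_right integrable_mult_left
          Bochner_Integration.integrable_add integrable_std_normal_density_translate) auto
  finally show "(\<integral>\<^sup>+p. ennreal (norm (?F p)) \<partial>(\<mu> \<Otimes>\<^sub>M lborel)) < \<infinity>"
    by (simp add: order_le_less_trans)
qed

lemma integral_gprime_tail_translate_diff:
  assumes "a \<le> b"
  shows "(\<integral>x. gprime_tail (a - x) - gprime_tail (b - x) \<partial>\<mu>)
           = (\<integral>t. indicator {a..<b} t * (\<integral>x. gprime (t - x) \<partial>\<mu>) \<partial>lborel)"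
proof -
  interpret pair_sigma_finite \<mu> lborel
    by (intro pair_sigma_finite.intro sigma_finite_if_integrable_gprime_translate lborel.sigma_finite_measure_axioms)
  have "(\<integral>t. indicator {a..<b} t * gprime (t - x) \<partial>lborel) = gprime_tail (a - x) - gprime_tail (b - x)"
    for x
  proof -
    have "(\<integral>t. indicator {a..<b} t * gprime (t - x) \<partial>lborel)
        = (\<integral>u. indicator {a..<b} (x + u) * gprime u \<partial>lborel)"
      using lborel_integral_real_affine[of 1 "\<lambda>t. indicator {a..<b} t * gprime (t - x)" x] by simp
    also have "\<dots> = (\<integral>u. indicator {a - x..} u * gprime u - indicator {b - x..} u * gprime u \<partial>lborel)"
      using assms by (intro Bochner_Integration.integral_cong) (auto split: split_indicator)
    also have "\<dots> = gprime_tail (a - x) - gprime_tail (b - x)"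
      unfolding gprime_tail_def by (simp add: integrable_indicator_gprime)
    finally show ?thesis .
  qed
  then have "(\<integral>x. gprime_tail (a - x) - gprime_tail (b - x) \<partial>\<mu>)
      = (\<integral>x. (\<integral>t. indicator {a..<b} t * gprime (t - x) \<partial>lborel) \<partial>\<mu>)"
    by simp
  also have "\<dots> = (\<integral>t. (\<integral>x. indicator {a..<b} t * gprime (t - x) \<partial>\<mu>) \<partial>lborel)"
    using Fubini_integral[OF integrable_pair_indicator_gprime_translate[OF assms]] by simp
  finally show ?thesis by simp
qed

lemma integral_gprime_tail_translate_eq:
  assumes "\<And>t. (\<integral>x. gprime (t - x) \<partial>\<mu>) = 0"
  shows "(\<integral>x. gprime_tail (s - x) \<partial>\<mu>) = (\<integral>x. gprime_tail (- x) \<partial>\<mu>)"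
proof -
  have "(\<integral>x. gprime_tail (a - x) \<partial>\<mu>) = (\<integral>x. gprime_tail (b - x) \<partial>\<mu>)" if "a \<le> b" for a b
    using integral_gprime_tail_translate_diff[OF that]
    by (simp add: assms integrable_gprime_tail_translate)
  from this[of s 0] this[of 0 s] show ?thesis by (cases "s \<le> 0") simp_all
qed

lemma integrable_inverse_1_plus_square_if_annihilates_gprime:
  assumes "\<And>t. (\<integral>x. gprime (t - x) \<partial>\<mu>) = 0"
  shows "integrable \<mu> (\<lambda>x. inverse (1 + x\<^sup>2))"
proof (rule integrableI_nonneg)
  interpret pair_sigma_finite \<mu> lborel
    by (intro pair_sigma_finite.intro sigma_finite_if_integrable_gprime_translate lborel.sigma_finite_measure_axioms)
  have [measurable_cong]: "sets (\<mu> \<Otimes>\<^sub>M lborel) = sets (borel \<Otimes>\<^sub>M borel)"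
    by (intro sets_pair_measure_cong) (simp_all add: sets_\<mu>)
  define c where "c = 3 / (2 * std_normal_density 2)"
  define T where "T = (\<integral>x. gprime_tail (- x) \<partial>\<mu>)"
  have "0 \<le> c" "0 \<le> T"
    by (auto simp: c_def T_def gprime_tail_nonneg intro!: integral_nonneg)
  have "(\<integral>\<^sup>+x. ennreal (inverse (1 + x\<^sup>2)) \<partial>\<mu>)
      \<le> (\<integral>\<^sup>+x. (\<integral>\<^sup>+s. ennreal (c * inverse (1 + s\<^sup>2) * gprime_tail (s - x)) \<partial>lborel) \<partial>\<mu>)"
    unfolding c_def by (intro nn_integral_mono inverse_1_plus_square_le_nn_integral_gprime_tail)
  also have "\<dots> = (\<integral>\<^sup>+s. (\<integral>\<^sup>+x. ennreal (c * inverse (1 + s\<^sup>2) * gprime_tail (s - x)) \<partial>\<mu>) \<partial>lborel)"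
    by (rule Fubini'[symmetric]) measurable
  also have "\<dots> = (\<integral>\<^sup>+s. ennreal (c * inverse (1 + s\<^sup>2) * T) \<partial>lborel)"
  proof (rule nn_integral_cong)
    fix s :: real
    have "(\<integral>\<^sup>+x. ennreal (c * inverse (1 + s\<^sup>2) * gprime_tail (s - x)) \<partial>\<mu>)
        = ennreal (\<integral>x. c * inverse (1 + s\<^sup>2) * gprime_tail (s - x) \<partial>\<mu>)"
      using \<open>0 \<le> c\<close>
      by (intro nn_integral_eq_integral integrable_mult_right integrable_gprime_tail_translate AE_I2)
         (simp add: gprime_tail_nonneg add_pos_nonneg)
    then show "(\<integral>\<^sup>+x. ennreal (c * inverse (1 + s\<^sup>2) * gprime_tail (s - x)) \<partial>\<mu>)
        = ennreal (c * inverse (1 + s\<^sup>2) * T)"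
      by (simp add: T_def integral_gprime_tail_translate_eq[OF assms])
  qed
  also have "\<dots> = ennreal (\<integral>s. c * inverse (1 + s\<^sup>2) * T \<partial>lborel)"
    using \<open>0 \<le> c\<close> \<open>0 \<le> T\<close>
    by (intro nn_integral_eq_integral integrable_mult_left integrable_mult_right
          integrable_lborel_inverse_1_plus_square AE_I2) (simp add: add_pos_nonneg)
  finally show "(\<integral>\<^sup>+x. ennreal (inverse (1 + x\<^sup>2)) \<partial>\<mu>) < \<infinity>"
    by (simp add: order_le_less_trans)
qed (simp_all add: sets_\<mu>)

end

lemma schwartz_seminorm_ge:
  assumes "schwartz_fun f"
  shows "\<bar>x ^ k * (deriv ^^ m) f x\<bar> \<le> schwartz_seminorm k m f"
proof -
  obtain B where "\<forall>y \<in> range (\<lambda>x. x ^ k * (deriv ^^ m) f x). norm y \<le> B"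
    using assms unfolding schwartz_fun_def bounded_iff by blast
  then have "bdd_above (range (\<lambda>x. \<bar>x ^ k * (deriv ^^ m) f x\<bar>))"
    by (intro bdd_aboveI[of _ B]) auto
  then show ?thesis unfolding schwartz_seminorm_def by (rule cSUP_upper[OF UNIV_I])
qed

lemma schwartz_seminorm_nonneg: "schwartz_fun f \<Longrightarrow> 0 \<le> schwartz_seminorm k m f"
  using schwartz_seminorm_ge[of f 0 k m] by linarith

lemma borel_measurable_schwartz_fun:
  assumes "schwartz_fun f"
  shows "f \<in> borel_measurable borel"
proof (rule borel_measurable_continuous_onI, intro continuous_at_imp_continuous_on ballI)
  fix x :: real
  have "(deriv ^^ 0) f differentiable (at x)" using assms unfolding schwartz_fun_def by blast
  then show "isCont f x" by (simp add: differentiable_imp_continuous_within)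
qed

lemma abs_schwartz_fun_le:
  assumes "schwartz_fun f"
  shows "\<bar>f x\<bar> \<le> (schwartz_seminorm 0 0 f + schwartz_seminorm 2 0 f) * inverse (1 + x\<^sup>2)"
proof -
  have "\<bar>f x\<bar> * (1 + x\<^sup>2) = \<bar>f x\<bar> + \<bar>x\<^sup>2 * f x\<bar>" by (simp add: abs_mult algebra_simps)
  also have "\<dots> \<le> schwartz_seminorm 0 0 f + schwartz_seminorm 2 0 f"
    using schwartz_seminorm_ge[OF assms, of x 0 0] schwartz_seminorm_ge[OF assms, of x 2 0] by simp
  finally show ?thesis by (simp add: field_simps add_pos_nonneg)
qed

lemma tempered_measure_if_integrable_inverse_1_plus_square:
  assumes sets_M: "sets M = sets borel" and integrable_M: "integrable M (\<lambda>x. inverse (1 + x\<^sup>2))"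
  shows "tempered_measure M"
proof -
  define C where "C = (\<integral>x. inverse (1 + x\<^sup>2) \<partial>M)"
  have bound: "integrable M f \<and> \<bar>integral\<^sup>L M f\<bar> \<le> C * (\<Sum>k\<le>2. \<Sum>m\<le>2. schwartz_seminorm k m f)"
    if f: "schwartz_fun f" for f
  proof
    let ?p = "\<lambda>k m. schwartz_seminorm k m f"
    have "0 \<le> (?p 0 0 + ?p 2 0) * inverse (1 + x\<^sup>2)" for x
      using schwartz_seminorm_nonneg[OF f] by (simp add: add_pos_nonneg)
    then show "integrable M f"
      using borel_measurable_schwartz_fun[OF f] abs_schwartz_fun_le[OF f]
      by (intro Bochner_Integration.integrable_bound[OF integrable_mult_right[OF integrable_M]])
         (auto simp: measurable_cong_sets[OF sets_M refl] intro: order_trans[OF _ abs_ge_self])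
    have "\<bar>integral\<^sup>L M f\<bar> \<le> (\<integral>x. (?p 0 0 + ?p 2 0) * inverse (1 + x\<^sup>2) \<partial>M)"
      using abs_schwartz_fun_le[OF f] \<open>integrable M f\<close>
      by (intro integral_abs_bound_integral integrable_mult_right integrable_M) auto
    also have "\<dots> = C * (?p 0 0 + ?p 2 0)" by (simp add: C_def)
    also have "\<dots> \<le> C * (\<Sum>k\<le>2. \<Sum>m\<le>2. ?p k m)"
      using schwartz_seminorm_nonneg[OF f]
      by (intro mult_left_mono) (auto simp: C_def eval_nat_numeral intro!: integral_nonneg)
    finally show "\<bar>integral\<^sup>L M f\<bar> \<le> C * (\<Sum>k\<le>2. \<Sum>m\<le>2. ?p k m)" .
  qed
  then show ?thesis unfolding tempered_measure_def by blast
qed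

theorem lemma10:
  fixes \<mu> :: "real measure"
  assumes "sets \<mu> = sets borel"
    and "\<And>t. integrable \<mu> (\<lambda>x. gprime (t - x))"
    and "\<And>t. (\<integral>x. gprime (t - x) \<partial>\<mu>) = 0"
  shows "tempered_measure \<mu>"
  using assms
  by (intro tempered_measure_if_integrable_inverse_1_plus_square
        integrable_inverse_1_plus_square_if_annihilates_gprime)

end
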